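(* Let $R=k[x_1,\dots,x_n]$, $f_1,\dots,f_m\in R$, $I=\langle f_1,\dots,f_m\rangle$, with fixed term orders on $R$ and $R^m$. Let $G$ be a finite set of polynomials in $I$ with $\{f_1^{[\mathbf e_1]},\dots,f_m^{[\mathbf e_m]}\}\subset G$, and let $f^{[\mathbf u]}$ be a polynomial in $I$. Suppose that for every critical pair $(t_g,g^{[\mathbf v]},t_h,h^{[\mathbf w]})$ of elements of $G$ with $\mathrm{lpp}(\mathbf u)\succeq\mathrm{lpp}(t_g\mathbf v)$, the S-polynomial of this critical pair has a standard representation w.r.t. $G$. Then $f^{[\mathbf u]}$ has a standard representation w.r.t. $G$.
   Context: Let $\mathbf f=(f_1,\dots,f_m)$; a polynomial in $I$ is a pair $f^{[\mathbf u]}$ with $\mathbf u\in R^m$ and $f=\mathbf u\cdot\mathbf f$, with operations $f^{[\mathbf u]}+g^{[\mathbf v]}=(f+g)^{[\mathbf u+\mathbf v]}$, $ct(f^{[\mathbf u]})=(ctf)^{[ct\mathbf u]}$. $\mathbf e_i$ is the $i$-th unit vector. $\mathrm{lpp},\mathrm{lc}$ are leading power product and coefficient (both orders denoted $\prec$), with $\mathrm{lpp}(0)=0\prec$ all nonzero power products. Critical pair: for $g^{[\mathbf v]},h^{[\mathbf w]}$ with $g,h\ne0$, $t=\mathrm{lcm}(\mathrm{lpp}(g),\mathrm{lpp}(h))$, $t_g=t/\mathrm{lpp}(g)$, $t_h=t/\mathrm{lpp}(h)$; if $\mathrm{lpp}(t_g\mathbf v)\succeq\mathrm{lpp}(t_h\mathbf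 w)$ then $(t_g,g^{[\mathbf v]},t_h,h^{[\mathbf w]})$ is a critical pair, with S-polynomial $t_g(g^{[\mathbf v]})-c\,t_h(h^{[\mathbf w]})$, $c=\mathrm{lc}(g)/\mathrm{lc}(h)$. A polynomial $f^{[\mathbf u]}$ in $I$ has a standard representation w.r.t. a set $B$ if there are $p_1,\dots,p_s\in R$ and $g_1^{[\mathbf v_1]},\dots,g_s^{[\mathbf v_s]}\in B$ with $f=\sum_i p_ig_i$, $\mathrm{lpp}(f)\succeq\mathrm{lpp}(p_ig_i)$ and $\mathrm{lpp}(\mathbf u)\succeq\mathrm{lpp}(p_i\mathbf v_i)$ for all $i$. *)

theory Defs
  imports Main "HOL-Library.Poly_Mapping"
begin

(* Power products in the variables 'x (finitely many, 'x :: finite) are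
  exponent vectors  'x \<Rightarrow>\<^sub>0 nat  (multiplication = addition of exponents);
  polynomials in R = k[x] are  ('x \<Rightarrow>\<^sub>0 nat) \<Rightarrow>\<^sub>0 'k;
  vectors in R^m are functions  'i \<Rightarrow> poly  with a finite index type 'i, m = CARD('i);
  module terms (power products of R^m) are pairs (t, i) meaning t e_i. *)

type_synonym 'x pp = "'x \<Rightarrow>\<^sub>0 nat"
type_synonym ('x, 'k) mpoly = "'x pp \<Rightarrow>\<^sub>0 'k"
type_synonym ('x, 'k, 'i) mvec = "'i \<Rightarrow> ('x, 'k) mpoly"

definition term_order :: "('x pp \<Rightarrow> 'x pp \<Rightarrow> bool) \<Rightarrow> bool" where
  "term_order ord \<longleftrightarrow>
     (\<forall>s. ord s s) \<and>
     (\<forall>s t. ord s t \<and> ord t s \<longrightarrow> s = t) \<and>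
     (\<forall>s t u. ord s t \<and> ord t u \<longrightarrow> ord s u) \<and>
     (\<forall>s t. ord s t \<or> ord t s) \<and>
     wf {(s, t). ord s t \<and> s \<noteq> t} \<and>
     (\<forall>t. ord 0 t) \<and>
     (\<forall>s t r. ord s t \<longrightarrow> ord (s + r) (t + r))"

definition module_term_order :: "('x pp \<times> 'i \<Rightarrow> 'x pp \<times> 'i \<Rightarrow> bool) \<Rightarrow> bool" where
  "module_term_order ordm \<longleftrightarrow>
     (\<forall>a. ordm a a) \<and>
     (\<forall>a b. ordm a b \<and> ordm b a \<longrightarrow> a = b) \<and>
     (\<forall>a b c. ordm a b \<and> ordm b c \<longrightarrow> ordm a c) \<and>
     (\<forall>a b. ordm a b \<or> ordm b a) \<and>
     wf {(a, b). ordm a b \<and> a \<noteq> b} \<and>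
     (\<forall>t i r. ordm (t, i) (t + r, i)) \<and>
     (\<forall>s i t j r. ordm (s, i) (t, j) \<longrightarrow> ordm (s + r, i) (t + r, j))"

(* Order extended to  option : None plays the role of lpp(0) = 0, which is
  smaller than every nonzero power product. *)
fun opt_le :: "('a \<Rightarrow> 'a \<Rightarrow> bool) \<Rightarrow> 'a option \<Rightarrow> 'a option \<Rightarrow> bool" where
  "opt_le ord None _ = True"
| "opt_le ord (Some a) None = False"
| "opt_le ord (Some a) (Some b) = ord a b"

definition max_elem :: "('a \<Rightarrow> 'a \<Rightarrow> bool) \<Rightarrow> 'a set \<Rightarrow> 'a option" where
  "max_elem ord A = (if A = {} then None else Some (THE a. a \<in> A \<and> (\<forall>b\<in>A. ord b a)))"

definition lpp :: "('x pp \<Rightarrow> 'x pp \<Rightarrow> bool) \<Rightarrow> ('x, 'k::zero) mpoly \<Rightarrow> 'x pp option" where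
  "lpp ord p = max_elem ord (Poly_Mapping.keys p)"

definition lc :: "('x pp \<Rightarrow> 'x pp \<Rightarrow> bool) \<Rightarrow> ('x, 'k::zero) mpoly \<Rightarrow> 'k" where
  "lc ord p = (case lpp ord p of None \<Rightarrow> 0 | Some t \<Rightarrow> Poly_Mapping.lookup p t)"

definition lppv :: "('x pp \<times> 'i \<Rightarrow> 'x pp \<times> 'i \<Rightarrow> bool) \<Rightarrow> ('x, 'k::zero, 'i) mvec
                     \<Rightarrow> ('x pp \<times> 'i) option" where
  "lppv ordm u = max_elem ordm {(t, i). t \<in> Poly_Mapping.keys (u i)}"

definition monom_pp :: "'x pp \<Rightarrow> ('x, 'k::{zero,one}) mpoly" where
  "monom_pp t = Poly_Mapping.single t 1"

definition vscale :: "('x, 'k::comm_ring_1) mpoly \<Rightarrow> ('x, 'k, 'i) mvec \<Rightarrow> ('x, 'k, 'i) mvec" where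
  "vscale p u = (\<lambda>i. p * u i)"

definition unit_vec :: "'i \<Rightarrow> ('x, 'k::comm_ring_1, 'i) mvec" where
  "unit_vec i = (\<lambda>j. if j = i then 1 else 0)"

(* A polynomial in I is a pair f^[u] = (f, u) with f = u \<cdot> F,
  F = (f_1, ..., f_m). *)
definition in_ideal_lab :: "('x, 'k::comm_ring_1, 'i::finite) mvec \<Rightarrow> ('x, 'k) mpoly \<times> ('x, 'k, 'i) mvec \<Rightarrow> bool" where
  "in_ideal_lab F fu \<longleftrightarrow> fst fu = (\<Sum>i\<in>UNIV. snd fu i * F i)"

definition lab_scale :: "('x, 'k::comm_ring_1) mpoly \<Rightarrow> ('x, 'k) mpoly \<times> ('x, 'k, 'i) mvec
                          \<Rightarrow> ('x, 'k) mpoly \<times> ('x, 'k, 'i) mvec" where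
  "lab_scale p fu = (p * fst fu, vscale p (snd fu))"

definition lab_minus :: "('x, 'k::comm_ring_1) mpoly \<times> ('x, 'k, 'i) mvec
                          \<Rightarrow> ('x, 'k) mpoly \<times> ('x, 'k, 'i) mvec
                          \<Rightarrow> ('x, 'k) mpoly \<times> ('x, 'k, 'i) mvec" where
  "lab_minus a b = (fst a - fst b, \<lambda>i. snd a i - snd b i)"

(* lcm of power products (componentwise max of exponents); s + (t - s) is
  computed pointwise with truncated subtraction on nat. *)
definition pp_lcm :: "'x pp \<Rightarrow> 'x pp \<Rightarrow> 'x pp" where
  "pp_lcm s t = s + (t - s)"

definition critical_pair ::
  "('x pp \<Rightarrow> 'x pp \<Rightarrow> bool) \<Rightarrow> ('x pp \<times> 'i \<Rightarrow> 'x pp \<times> 'i \<Rightarrow> bool)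
   \<Rightarrow> (('x, 'k::field) mpoly \<times> ('x, 'k, 'i) mvec) set
   \<Rightarrow> 'x pp \<Rightarrow> ('x, 'k) mpoly \<times> ('x, 'k, 'i) mvec
   \<Rightarrow> 'x pp \<Rightarrow> ('x, 'k) mpoly \<times> ('x, 'k, 'i) mvec \<Rightarrow> bool" where
  "critical_pair ord ordm G tg gv th hw \<longleftrightarrow>
     gv \<in> G \<and> hw \<in> G \<and> fst gv \<noteq> 0 \<and> fst hw \<noteq> 0 \<and>
     (let lg = the (lpp ord (fst gv)); lh = the (lpp ord (fst hw)); t = pp_lcm lg lh in
        tg = t - lg \<and> th = t - lh) \<and>
     opt_le ordm (lppv ordm (vscale (monom_pp th) (snd hw)))
                 (lppv ordm (vscale (monom_pp tg) (snd gv)))"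

definition spoly ::
  "('x pp \<Rightarrow> 'x pp \<Rightarrow> bool) \<Rightarrow> 'x pp \<Rightarrow> ('x, 'k::field) mpoly \<times> ('x, 'k, 'i) mvec
   \<Rightarrow> 'x pp \<Rightarrow> ('x, 'k) mpoly \<times> ('x, 'k, 'i) mvec \<Rightarrow> ('x, 'k) mpoly \<times> ('x, 'k, 'i) mvec" where
  "spoly ord tg gv th hw =
     lab_minus (lab_scale (monom_pp tg) gv)
               (lab_scale (Poly_Mapping.single th (lc ord (fst gv) / lc ord (fst hw))) hw)"

definition std_rep ::
  "('x pp \<Rightarrow> 'x pp \<Rightarrow> bool) \<Rightarrow> ('x pp \<times> 'i \<Rightarrow> 'x pp \<times> 'i \<Rightarrow> bool)
   \<Rightarrow> (('x, 'k::comm_ring_1) mpoly \<times> ('x, 'k, 'i) mvec) set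
   \<Rightarrow> ('x, 'k) mpoly \<times> ('x, 'k, 'i) mvec \<Rightarrow> bool" where
  "std_rep ord ordm B fu \<longleftrightarrow>
     (\<exists>ps :: (('x, 'k) mpoly \<times> (('x, 'k) mpoly \<times> ('x, 'k, 'i) mvec)) list.
        (\<forall>(p, gv) \<in> set ps. gv \<in> B) \<and>
        fst fu = (\<Sum>(p, gv) \<leftarrow> ps. p * fst gv) \<and>
        (\<forall>(p, gv) \<in> set ps.
            opt_le ord (lpp ord (p * fst gv)) (lpp ord (fst fu)) \<and>
            opt_le ordm (lppv ordm (vscale p (snd gv))) (lppv ordm (snd fu))))"

end

theory Submission
  imports Defs "HOL-Library.Multiset"
begin

text \<open>
  Write \<open>f = \<Sum>\<^sub>i u\<^sub>i f\<^sub>i\<close> and expand it into terms \<open>c x\<^sup>s g\<close> with \<open>g\<^sup>[\<^sup>v\<^sup>] \<in> G\<close>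
  whose labels \<open>lpp(c x\<^sup>s v)\<close> are at most \<open>lpp(u)\<close>.  Let \<open>T\<close> be the largest leading power
  product of a term.  If \<open>T\<close> occurs in \<open>f\<close>, the expansion is a standard representation.
  Otherwise the terms at \<open>T\<close> cancel, so there are at least two of them.  Ordered by label,
  the first one minus a multiple of the second is \<open>c x\<^sup>s\<close> times the S-polynomial of a critical
  pair whose label is at most \<open>lpp(u)\<close>; its standard representation turns the difference into
  terms below \<open>T\<close>.  This lowers the number of terms at \<open>T\<close> and eventually \<open>T\<close> itself, which
  terminates because the term order is well-founded.
\<close>

section \<open>Polynomials and power products\<close>

lemma poly_mapping_sum_single:
  "p = (\<Sum>s\<in>Poly_Mapping.keys p. Poly_Mapping.single s (Poly_Mapping.lookup p s))"
  by (rule poly_mapping_eqI) (simp add: lookup_sum lookup_single when_def in_keys_iff)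

lemma lookup_sum_mset:
  "Poly_Mapping.lookup (\<Sum>e\<in>#M. f e) k = (\<Sum>e\<in>#M. Poly_Mapping.lookup (f e) k)"
  by (induction M) (auto simp: lookup_add)

lemma lookup_single_mult_add:
  fixes g :: "'a::cancel_comm_monoid_add \<Rightarrow>\<^sub>0 'k::comm_semiring_1"
  shows "Poly_Mapping.lookup (Poly_Mapping.single s c * g) (s + t) = c * Poly_Mapping.lookup g t"
  by (simp add: lookup_mult lookup_single when_mult Sum_any_right_distrib mult_when)

lemma keys_single_mult_subset:
  fixes g :: "'a::cancel_comm_monoid_add \<Rightarrow>\<^sub>0 'k::comm_semiring_1"
  shows "Poly_Mapping.keys (Poly_Mapping.single s c * g) \<subseteq> (\<lambda>t. s + t) ` Poly_Mapping.keys g"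
  using keys_mult[of "Poly_Mapping.single s c" g] by (auto split: if_splits)

lemma keys_single_mult:
  fixes g :: "'a::cancel_comm_monoid_add \<Rightarrow>\<^sub>0 'k::{comm_semiring_1,semiring_no_zero_divisors}"
  assumes "c \<noteq> 0"
  shows "Poly_Mapping.keys (Poly_Mapping.single s c * g) = (\<lambda>t. s + t) ` Poly_Mapping.keys g"
proof
  show "Poly_Mapping.keys (Poly_Mapping.single s c * g) \<subseteq> (\<lambda>t. s + t) ` Poly_Mapping.keys g"
    by (rule keys_single_mult_subset)
  show "(\<lambda>t. s + t) ` Poly_Mapping.keys g \<subseteq> Poly_Mapping.keys (Poly_Mapping.single s c * g)"
    using assms by (auto simp: in_keys_iff lookup_single_mult_add)
qed

lemma lookup_mult_unique_decomposition:
  fixes p g :: "'a::cancel_comm_monoid_add \<Rightarrow>\<^sub>0 'k::comm_semiring_1"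
  assumes a: "a \<in> Poly_Mapping.keys p"
    and unique: "\<And>s t. s \<in> Poly_Mapping.keys p \<Longrightarrow> t \<in> Poly_Mapping.keys g \<Longrightarrow> s + t = a + b \<Longrightarrow> s = a"
  shows "Poly_Mapping.lookup (p * g) (a + b) = Poly_Mapping.lookup p a * Poly_Mapping.lookup g b"
proof -
  let ?m = "\<lambda>s. Poly_Mapping.single s (Poly_Mapping.lookup p s) * g"
  have other: "Poly_Mapping.lookup (?m s) (a + b) = 0" if s: "s \<in> Poly_Mapping.keys p - {a}" for s
  proof (cases "\<exists>t. a + b = s + t")
    case True
    then obtain t where t: "a + b = s + t" by blast
    then have "t \<notin> Poly_Mapping.keys g" using unique s by force
    then show ?thesis by (simp add: t lookup_single_mult_add in_keys_iff)
  next
    case False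
    then have "a + b \<notin> Poly_Mapping.keys (?m s)"
      using keys_mult[of "Poly_Mapping.single s (Poly_Mapping.lookup p s)" g] by (auto split: if_splits)
    then show ?thesis by (simp add: in_keys_iff)
  qed
  have "p * g = (\<Sum>s\<in>Poly_Mapping.keys p. ?m s)"
    by (subst poly_mapping_sum_single[of p]) (simp add: sum_distrib_right)
  then have "Poly_Mapping.lookup (p * g) (a + b) = (\<Sum>s\<in>Poly_Mapping.keys p. Poly_Mapping.lookup (?m s) (a + b))"
    by (simp add: lookup_sum)
  also have "\<dots> = Poly_Mapping.lookup (?m a) (a + b)"
    using a other by (simp add: sum.remove sum.neutral)
  finally show ?thesis by (simp add: lookup_single_mult_add)
qed

lemma add_greatest_keys_in_keys_mult:
  fixes p g :: "'a::cancel_comm_monoid_add \<Rightarrow>\<^sub>0 'k::{comm_semiring_1,semiring_no_zero_divisors}"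
  assumes mono: "\<And>r s t. R s t \<Longrightarrow> R (r + s) (r + t)"
    and antisym: "\<And>s t. R s t \<Longrightarrow> R t s \<Longrightarrow> s = t"
    and a: "a \<in> Poly_Mapping.keys p" "\<And>s. s \<in> Poly_Mapping.keys p \<Longrightarrow> R s a"
    and b: "b \<in> Poly_Mapping.keys g" "\<And>t. t \<in> Poly_Mapping.keys g \<Longrightarrow> R t b"
  shows "a + b \<in> Poly_Mapping.keys (p * g)"
proof -
  have unique: "s = a" if "s \<in> Poly_Mapping.keys p" "t \<in> Poly_Mapping.keys g" "s + t = a + b" for s t
  proof -
    have "R (a + b) (s + b)" using mono[OF b(2)[OF that(2)], of s] that(3) by simp
    moreover have "R (s + b) (a + b)" using mono[OF a(2)[OF that(1)], of b] by (simp add: add.commute)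
    ultimately show "s = a" using antisym by fastforce
  qed
  have "Poly_Mapping.lookup (p * g) (a + b) = Poly_Mapping.lookup p a * Poly_Mapping.lookup g b"
    using a(1) unique by (rule lookup_mult_unique_decomposition)
  then show ?thesis
    using a(1) b(1) by (simp add: in_keys_iff)
qed

lemma pp_lcm_commute: "pp_lcm s t = pp_lcm t s"
  by (rule poly_mapping_eqI) (simp add: pp_lcm_def lookup_add lookup_minus)

lemma pp_lcm_minus_add: "(pp_lcm s t - s) + s = pp_lcm s t"
  by (rule poly_mapping_eqI) (simp add: pp_lcm_def lookup_add lookup_minus)

lemma pp_lcm_cofactors:
  assumes "sg + lg = T" and "sh + lh = T"
  defines "L \<equiv> pp_lcm lg lh"
  shows "(T - L) + (L - lg) = sg" and "(T - L) + (L - lh) = sh" and "(T - L) + L = T"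
proof -
  have "Poly_Mapping.lookup ((T - L) + (L - lg)) x = Poly_Mapping.lookup sg x \<and>
      Poly_Mapping.lookup ((T - L) + (L - lh)) x = Poly_Mapping.lookup sh x \<and>
      Poly_Mapping.lookup ((T - L) + L) x = Poly_Mapping.lookup T x" for x
  proof -
    have "Poly_Mapping.lookup sg x + Poly_Mapping.lookup lg x = Poly_Mapping.lookup T x"
      and "Poly_Mapping.lookup sh x + Poly_Mapping.lookup lh x = Poly_Mapping.lookup T x"
      using assms by (metis lookup_add)+
    then show ?thesis by (simp add: L_def pp_lcm_def lookup_add lookup_minus) arith
  qed
  then show "(T - L) + (L - lg) = sg" and "(T - L) + (L - lh) = sh" and "(T - L) + L = T"
    by (simp_all add: poly_mapping_eq_iff fun_eq_iff)
qed

section \<open>Greatest elements\<close>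

lemma finite_has_greatest_wrt:
  assumes trans: "\<And>a b c. R a b \<Longrightarrow> R b c \<Longrightarrow> R a c" and total: "\<And>a b. R a b \<or> R b a"
    and "finite A" "A \<noteq> {}"
  shows "\<exists>a\<in>A. \<forall>b\<in>A. R b a"
  using \<open>finite A\<close> \<open>A \<noteq> {}\<close>
proof (induction A rule: finite_ne_induct)
  case (singleton x)
  then show ?case using total by auto
next
  case (insert x A)
  then obtain a where "a \<in> A" "\<forall>b\<in>A. R b a" by blast
  then show ?case using trans total by (metis insert_iff)
qed

lemma max_elem_eq_Some_iff:
  assumes antisym: "\<And>a b. R a b \<Longrightarrow> R b a \<Longrightarrow> a = b"
    and trans: "\<And>a b c. R a b \<Longrightarrow> R b c \<Longrightarrow> R a c" and total: "\<And>a b. R a b \<or> R b a"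
    and "finite A"
  shows "max_elem R A = Some a \<longleftrightarrow> a \<in> A \<and> (\<forall>b\<in>A. R b a)"
proof -
  have the_greatest: "(THE a. a \<in> A \<and> (\<forall>b\<in>A. R b a)) = m" if "m \<in> A" "\<forall>b\<in>A. R b m" for m
    by (rule the_equality) (use that antisym in blast)+
  show ?thesis
  proof
    assume a: "max_elem R A = Some a"
    then have "A \<noteq> {}" by (auto simp: max_elem_def)
    then obtain m where m: "m \<in> A" "\<forall>b\<in>A. R b m"
      using finite_has_greatest_wrt[of R A] trans total \<open>finite A\<close> by metis
    then have "a = m"
      using a the_greatest[OF m] by (simp add: max_elem_def \<open>A \<noteq> {}\<close>)
    then show "a \<in> A \<and> (\<forall>b\<in>A. R b a)" using m by simp
  next
    assume "a \<in> A \<and> (\<forall>b\<in>A. R b a)"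
    then show "max_elem R A = Some a"
      using the_greatest[of a] by (auto simp: max_elem_def)
  qed
qed

lemma max_elem_eq_None_iff: "max_elem R A = None \<longleftrightarrow> A = {}"
  by (simp add: max_elem_def)

lemma opt_le_trans:
  assumes "\<And>a b c. R a b \<Longrightarrow> R b c \<Longrightarrow> R a c"
  shows "opt_le R x y \<Longrightarrow> opt_le R y z \<Longrightarrow> opt_le R x z"
  using assms by (cases x; cases y; cases z) auto

lemma opt_le_total:
  assumes "\<And>a b. R a b \<or> R b a"
  shows "opt_le R x y \<or> opt_le R y x"
  using assms by (cases x; cases y) auto

lemma multiset_empty_singleton_or_pair:
  obtains "M = {#}" | x where "M = {#x#}" | x y where "{#x, y#} \<subseteq># M"
proof (cases M)
  case (add x M')
  show thesis
  proof (cases M')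
    case (add y M'')
    then have "{#x, y#} \<subseteq># M" using \<open>M = add_mset x M'\<close> by simp
    then show thesis by (rule that(3))
  qed (use that(2) \<open>M = add_mset x M'\<close> in simp)
qed (rule that(1))

section \<open>Leading power products under term orders\<close>

lemma lc_eq_lookup: "lpp ord p = Some a \<Longrightarrow> lc ord p = Poly_Mapping.lookup p a"
  by (simp add: lc_def)

definition vkeys :: "('x, 'k::zero, 'i) mvec \<Rightarrow> ('x pp \<times> 'i) set" where
  "vkeys u = {(t, i). t \<in> Poly_Mapping.keys (u i)}"

lemma finite_vkeys: "finite (vkeys (u :: ('x, 'k::zero, 'i::finite) mvec))"
proof -
  have "vkeys u = (\<Union>i. (\<lambda>t. (t, i)) ` Poly_Mapping.keys (u i))"
    by (auto simp: vkeys_def)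
  then show ?thesis by simp
qed

lemma vkeys_eq_empty_iff: "vkeys u = {} \<longleftrightarrow> (\<forall>i. u i = 0)"
proof -
  have "vkeys u = {} \<longleftrightarrow> (\<forall>i. Poly_Mapping.keys (u i) = {})"
    unfolding vkeys_def by blast
  then show ?thesis by simp
qed

lemma lppv_eq_max_elem_vkeys: "lppv ordm u = max_elem ordm (vkeys u)"
  by (simp add: lppv_def vkeys_def)

definition shift_term :: "'x pp \<Rightarrow> 'x pp \<times> 'i \<Rightarrow> 'x pp \<times> 'i" where
  "shift_term s = (\<lambda>(t, i). (s + t, i))"

lemma shift_term_Pair [simp]: "shift_term s (t, i) = (s + t, i)"
  by (simp add: shift_term_def)

lemma shift_term_0 [simp]: "shift_term 0 = id"
  by (auto simp: shift_term_def)

lemma map_option_shift_term_shift_term [simp]: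
  "map_option (shift_term s) (map_option (shift_term t) x) = map_option (shift_term (s + t)) x"
  by (cases x) (auto simp: shift_term_def add.assoc)

locale term_orders =
  fixes ord :: "'x pp \<Rightarrow> 'x pp \<Rightarrow> bool"
    and ordm :: "'x pp \<times> 'i::finite \<Rightarrow> 'x pp \<times> 'i \<Rightarrow> bool"
  assumes term_order: "term_order ord"
    and module_term_order: "module_term_order ordm"
begin

lemma ord_refl: "ord s s"
  and ord_antisym: "ord s t \<Longrightarrow> ord t s \<Longrightarrow> s = t"
  and ord_trans: "ord s t \<Longrightarrow> ord t u \<Longrightarrow> ord s u"
  and ord_total: "ord s t \<or> ord t s"
  and wf_ord_strict: "wf {(s, t). ord s t \<and> s \<noteq> t}"
  using term_order unfolding term_order_def by (elim conjE; blast)+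

lemma ord_add_left: "ord s t \<Longrightarrow> ord (r + s) (r + t)"
proof -
  have "\<forall>s t r. ord s t \<longrightarrow> ord (s + r) (t + r)"
    using term_order unfolding term_order_def by (elim conjE)
  then show "ord s t \<Longrightarrow> ord (r + s) (r + t)" by (metis add.commute)
qed

lemma ordm_refl: "ordm a a"
  and ordm_antisym: "ordm a b \<Longrightarrow> ordm b a \<Longrightarrow> a = b"
  and ordm_trans: "ordm a b \<Longrightarrow> ordm b c \<Longrightarrow> ordm a c"
  and ordm_total: "ordm a b \<or> ordm b a"
  using module_term_order unfolding module_term_order_def by (elim conjE; blast)+

lemma ordm_le_add: "ordm (t, i) (r + t, i)"
proof -
  have "\<forall>t i r. ordm (t, i) (t + r, i)"
    using module_term_order unfolding module_term_order_def by (elim conjE)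
  then show ?thesis by (metis add.commute)
qed

lemma ordm_add_left: "ordm (s, i) (t, j) \<Longrightarrow> ordm (r + s, i) (r + t, j)"
proof -
  have "\<forall>s i t j r. ordm (s, i) (t, j) \<longrightarrow> ordm (s + r, i) (t + r, j)"
    using module_term_order unfolding module_term_order_def by (elim conjE)
  then show "ordm (s, i) (t, j) \<Longrightarrow> ordm (r + s, i) (r + t, j)" by (metis add.commute)
qed

lemma ordm_add_left_iff: "ordm (r + s, i) (r + t, j) \<longleftrightarrow> ordm (s, i) (t, j)"
proof
  assume le: "ordm (r + s, i) (r + t, j)"
  show "ordm (s, i) (t, j)"
  proof (rule ccontr)
    assume "\<not> ordm (s, i) (t, j)"
    then have "ordm (r + t, j) (r + s, i)" using ordm_total ordm_add_left by blast
    then have "(t, j) = (s, i)" using le ordm_antisym by fastforce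
    then show False using \<open>\<not> ordm (s, i) (t, j)\<close> ordm_refl by simp
  qed
qed (rule ordm_add_left)

lemma opt_le_ordm_trans: "opt_le ordm x y \<Longrightarrow> opt_le ordm y z \<Longrightarrow> opt_le ordm x z"
  by (rule opt_le_trans[OF ordm_trans])

lemma opt_le_ordm_total: "opt_le ordm x y \<or> opt_le ordm y x"
  by (rule opt_le_total) (rule ordm_total)

lemma opt_le_shift_term_iff:
  "opt_le ordm (map_option (shift_term s) x) (map_option (shift_term s) y) \<longleftrightarrow> opt_le ordm x y"
  by (cases x; cases y) (auto simp: shift_term_def ordm_add_left_iff split: prod.splits)

lemma opt_le_shift_term: "opt_le ordm x (map_option (shift_term s) x)"
  by (cases x) (auto simp: shift_term_def ordm_le_add split: prod.splits)

lemma lpp_eq_Some_iff: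
  "lpp ord p = Some a \<longleftrightarrow> a \<in> Poly_Mapping.keys p \<and> (\<forall>b\<in>Poly_Mapping.keys p. ord b a)"
  unfolding lpp_def by (rule max_elem_eq_Some_iff[OF ord_antisym ord_trans ord_total finite_keys])

lemma lpp_in_keys: "lpp ord p = Some a \<Longrightarrow> a \<in> Poly_Mapping.keys p"
  and ord_lpp: "lpp ord p = Some a \<Longrightarrow> b \<in> Poly_Mapping.keys p \<Longrightarrow> ord b a"
  by (simp_all add: lpp_eq_Some_iff)

lemma lpp_eq_None_iff: "lpp ord p = None \<longleftrightarrow> p = 0"
  by (simp add: lpp_def max_elem_eq_None_iff)

lemma lppv_eq_Some_iff: "lppv ordm u = Some a \<longleftrightarrow> a \<in> vkeys u \<and> (\<forall>b\<in>vkeys u. ordm b a)"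
  unfolding lppv_eq_max_elem_vkeys
  by (rule max_elem_eq_Some_iff[OF ordm_antisym ordm_trans ordm_total finite_vkeys])

lemma lppv_eq_None_iff: "lppv ordm u = None \<longleftrightarrow> (\<forall>i. u i = 0)"
  by (simp add: lppv_eq_max_elem_vkeys max_elem_eq_None_iff vkeys_eq_empty_iff)

lemma opt_le_lppv_iff: "opt_le ordm (lppv ordm u) (Some X) \<longleftrightarrow> (\<forall>k\<in>vkeys u. ordm k X)"
proof (cases "lppv ordm u")
  case None
  moreover from None have "vkeys u = {}" by (simp add: lppv_eq_None_iff vkeys_eq_empty_iff)
  ultimately show ?thesis by simp
next
  case (Some a)
  then have "a \<in> vkeys u" "\<forall>b\<in>vkeys u. ordm b a"
    by (simp_all add: lppv_eq_Some_iff)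
  then have "ordm a X \<longleftrightarrow> (\<forall>k\<in>vkeys u. ordm k X)" using ordm_trans by blast
  then show ?thesis using Some by simp
qed

lemma opt_le_lppv_if_in_vkeys: "k \<in> vkeys u \<Longrightarrow> opt_le ordm (Some k) (lppv ordm u)"
  using opt_le_lppv_iff[of u] lppv_eq_None_iff[of u] vkeys_eq_empty_iff[of u] ordm_refl
  by (cases "lppv ordm u") auto

lemma lppv_le_if_vkeys_subset:
  assumes "vkeys u \<subseteq> vkeys a \<union> vkeys b" and "opt_le ordm (lppv ordm b) (lppv ordm a)"
  shows "opt_le ordm (lppv ordm u) (lppv ordm a)"
proof (cases "lppv ordm a")
  case None
  then have "lppv ordm b = None" using assms(2) by (cases "lppv ordm b") auto
  with None have "vkeys u = {}"
    using assms(1) by (simp add: lppv_eq_max_elem_vkeys max_elem_eq_None_iff)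
  then show ?thesis by (simp add: lppv_eq_max_elem_vkeys max_elem_def)
next
  case (Some X)
  then have "\<forall>k\<in>vkeys a \<union> vkeys b. ordm k X"
    using assms(2) opt_le_lppv_iff[of a X] opt_le_lppv_iff[of b X] ordm_refl by auto
  then show ?thesis using Some assms(1) opt_le_lppv_iff[of u X] by auto
qed

lemma lpp_single_mult:
  fixes g :: "('x, 'k::{comm_semiring_1,semiring_no_zero_divisors}) mpoly"
  assumes "c \<noteq> 0" and "lpp ord g = Some a"
  shows "lpp ord (Poly_Mapping.single s c * g) = Some (s + a)"
  using assms by (auto simp: lpp_eq_Some_iff keys_single_mult intro: ord_add_left)

lemma vkeys_vscale_single:
  fixes v :: "('x, 'k::idom, 'i) mvec"
  assumes "c \<noteq> 0"
  shows "vkeys (vscale (Poly_Mapping.single s c) v) = shift_term s ` vkeys v"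
  by (auto simp: vkeys_def vscale_def shift_term_def keys_single_mult[OF assms])

lemma lppv_vscale_single:
  fixes v :: "('x, 'k::idom, 'i) mvec"
  assumes "c \<noteq> 0"
  shows "lppv ordm (vscale (Poly_Mapping.single s c) v) = map_option (shift_term s) (lppv ordm v)"
proof (cases "lppv ordm v")
  case None
  then have "\<forall>i. v i = 0" by (simp add: lppv_eq_None_iff)
  then have "lppv ordm (vscale (Poly_Mapping.single s c) v) = None"
    unfolding lppv_eq_None_iff vscale_def by simp
  then show ?thesis using None by simp
next
  case (Some a)
  obtain t0 i0 where a: "a = (t0, i0)" by fastforce
  have "(t0, i0) \<in> vkeys v" "\<forall>b\<in>vkeys v. ordm b (t0, i0)"
    using Some a by (simp_all add: lppv_eq_Some_iff)
  moreover have "shift_term s (t0, i0) = (s + t0, i0)" by simp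
  ultimately have "lppv ordm (vscale (Poly_Mapping.single s c) v) = Some (s + t0, i0)"
    unfolding lppv_eq_Some_iff vkeys_vscale_single[OF assms]
    by (auto simp: shift_term_def intro: ordm_add_left image_eqI[of _ "shift_term s" "(t0, i0)"])
  then show ?thesis using Some a by simp
qed

lemma lpp_mult:
  fixes p g :: "('x, 'k::{comm_semiring_1,semiring_no_zero_divisors}) mpoly"
  assumes a: "lpp ord p = Some a" and b: "lpp ord g = Some b"
  shows "lpp ord (p * g) = Some (a + b)"
proof -
  have "a + b \<in> Poly_Mapping.keys (p * g)"
    using a b ord_add_left ord_antisym by (intro add_greatest_keys_in_keys_mult[of ord]) (auto simp: lpp_eq_Some_iff)
  moreover have "ord (s + t) (a + b)" if "s \<in> Poly_Mapping.keys p" "t \<in> Poly_Mapping.keys g" for s t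
  proof -
    have "ord (s + t) (s + b)" using b that(2) by (auto simp: lpp_eq_Some_iff intro: ord_add_left)
    moreover have "ord (b + s) (b + a)" using a that(1) by (auto simp: lpp_eq_Some_iff intro: ord_add_left)
    ultimately show ?thesis by (metis ord_trans add.commute)
  qed
  ultimately show ?thesis
    using keys_mult[of p g] by (auto simp: lpp_eq_Some_iff)
qed

lemma lppv_vscale_ge:
  fixes q :: "('x, 'k::idom) mpoly" and v :: "('x, 'k, 'i) mvec"
  assumes v: "lppv ordm v = Some (t0, i0)" and r: "r \<in> Poly_Mapping.keys q"
  shows "opt_le ordm (Some (r + t0, i0)) (lppv ordm (vscale q v))"
proof -
  \<comment> \<open>the key of \<open>q\<close> that survives is the greatest one w.r.t. the order induced by \<open>ordm\<close> on
    component \<open>i0\<close>, which need not be the leading one w.r.t. \<open>ord\<close>\<close>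
  let ?R = "\<lambda>s t. ordm (s, i0) (t, i0)"
  have "\<exists>a\<in>Poly_Mapping.keys q. \<forall>s\<in>Poly_Mapping.keys q. ?R s a"
    by (rule finite_has_greatest_wrt[of ?R]) (meson ordm_trans, meson ordm_total, simp, use r in blast)
  then obtain a where a: "a \<in> Poly_Mapping.keys q" "\<forall>s\<in>Poly_Mapping.keys q. ?R s a" ..
  have t0: "t0 \<in> Poly_Mapping.keys (v i0)" "\<forall>t\<in>Poly_Mapping.keys (v i0). ?R t t0"
    using v by (auto simp: lppv_eq_Some_iff vkeys_def)
  have "a + t0 \<in> Poly_Mapping.keys (q * v i0)"
    using a t0 ordm_add_left ordm_antisym by (intro add_greatest_keys_in_keys_mult[of ?R]) auto
  then have "opt_le ordm (Some (a + t0, i0)) (lppv ordm (vscale q v))"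
    by (intro opt_le_lppv_if_in_vkeys) (simp add: vkeys_def vscale_def)
  moreover have "ordm (r + t0, i0) (a + t0, i0)"
    using ordm_add_left[of r i0 a i0 t0] a r by (simp add: add.commute)
  ultimately show ?thesis
    using opt_le_ordm_trans[of "Some (r + t0, i0)" "Some (a + t0, i0)"] by simp
qed

section \<open>S-polynomials\<close>

lemma lppv_vscale_monom_pp:
  fixes v :: "('x, 'k::idom, 'i) mvec"
  shows "lppv ordm (vscale (monom_pp t) v) = map_option (shift_term t) (lppv ordm v)"
  by (simp add: monom_pp_def lppv_vscale_single)

lemma fst_spoly:
  "fst (spoly ord tg gv th hw) =
     Poly_Mapping.single tg 1 * fst gv - Poly_Mapping.single th (lc ord (fst gv) / lc ord (fst hw)) * fst hw"
  by (simp add: spoly_def lab_minus_def lab_scale_def monom_pp_def)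

lemma snd_spoly:
  "snd (spoly ord tg gv th hw) i =
     Poly_Mapping.single tg 1 * snd gv i - Poly_Mapping.single th (lc ord (fst gv) / lc ord (fst hw)) * snd hw i"
  by (simp add: spoly_def lab_minus_def lab_scale_def monom_pp_def vscale_def)

lemma keys_spoly_below_lcm:
  fixes gv hw :: "('x, 'k::field) mpoly \<times> ('x, 'k, 'i) mvec"
  assumes g: "lpp ord (fst gv) = Some lg" and h: "lpp ord (fst hw) = Some lh"
    and k: "k \<in> Poly_Mapping.keys (fst (spoly ord (pp_lcm lg lh - lg) gv (pp_lcm lg lh - lh) hw))"
  shows "ord k (pp_lcm lg lh) \<and> k \<noteq> pp_lcm lg lh"
proof -
  define L where "L = pp_lcm lg lh"
  define d where "d = lc ord (fst gv) / lc ord (fst hw)"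
  let ?G = "Poly_Mapping.single (L - lg) 1 * fst gv" and ?H = "Poly_Mapping.single (L - lh) d * fst hw"
  have L: "(L - lg) + lg = L" "(L - lh) + lh = L"
    using pp_lcm_minus_add[of lg lh] pp_lcm_minus_add[of lh lg] by (simp_all add: L_def pp_lcm_commute)
  have lc: "lc ord (fst gv) = Poly_Mapping.lookup (fst gv) lg" "lc ord (fst hw) = Poly_Mapping.lookup (fst hw) lh" "Poly_Mapping.lookup (fst hw) lh \<noteq> 0"
    using lc_eq_lookup[OF g] lc_eq_lookup[OF h] lpp_in_keys[OF h] by (auto simp: in_keys_iff)
  have "Poly_Mapping.lookup ?G L = Poly_Mapping.lookup ?H L"
    using lookup_single_mult_add[of "L - lg" 1 "fst gv" lg] lookup_single_mult_add[of "L - lh" d "fst hw" lh]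
    by (simp add: L lc d_def)
  then have "L \<notin> Poly_Mapping.keys (?G - ?H)"
    by (simp add: in_keys_iff lookup_minus)
  moreover have "ord k' L" if k': "k' \<in> Poly_Mapping.keys ?G \<union> Poly_Mapping.keys ?H" for k'
  proof -
    obtain t s l where "k' = t + s" "ord s l" "t + l = L"
      using k' keys_single_mult_subset[of "L - lg" 1 "fst gv"] keys_single_mult_subset[of "L - lh" d "fst hw"]
        ord_lpp[OF g] ord_lpp[OF h] L by blast
    then show ?thesis using ord_add_left by blast
  qed
  ultimately show ?thesis
    using k keys_diff[of ?G ?H] by (auto simp: fst_spoly L_def d_def)
qed

lemma lppv_spoly_le:
  fixes gv hw :: "('x, 'k::field) mpoly \<times> ('x, 'k, 'i) mvec"
  assumes "opt_le ordm (lppv ordm (vscale (monom_pp th) (snd hw))) (lppv ordm (vscale (monom_pp tg) (snd gv)))"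
  shows "opt_le ordm (lppv ordm (snd (spoly ord tg gv th hw))) (lppv ordm (vscale (monom_pp tg) (snd gv)))"
proof (rule lppv_le_if_vkeys_subset[OF _ assms])
  have "Poly_Mapping.keys (Poly_Mapping.single th d * p) \<subseteq> Poly_Mapping.keys (Poly_Mapping.single th 1 * p)"
    for d and p :: "('x, 'k) mpoly"
    using keys_single_mult_subset[of th d p] by (simp add: keys_single_mult)
  then show "vkeys (snd (spoly ord tg gv th hw))
      \<subseteq> vkeys (vscale (monom_pp tg) (snd gv)) \<union> vkeys (vscale (monom_pp th) (snd hw))"
    using keys_diff by (fastforce simp: vkeys_def snd_spoly vscale_def monom_pp_def)
qed

end

section \<open>Representations by terms\<close>

type_synonym ('x, 'k, 'i) lpoly = "('x, 'k) mpoly \<times> ('x, 'k, 'i) mvec"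

type_synonym ('x, 'k, 'i) rep_term = "'k \<times> 'x pp \<times> ('x, 'k, 'i) lpoly"

fun term_poly :: "('x, 'k::comm_ring_1, 'i) rep_term \<Rightarrow> ('x, 'k) mpoly" where
  "term_poly (c, s, gv) = Poly_Mapping.single s c * fst gv"

text \<open>\<open>term_lpp\<close> is junk when \<open>fst gv = 0\<close>; admissible terms exclude this case.\<close>

fun term_lpp :: "('x pp \<Rightarrow> 'x pp \<Rightarrow> bool) \<Rightarrow> ('x, 'k::zero, 'i) rep_term \<Rightarrow> 'x pp" where
  "term_lpp ord (c, s, gv) = s + the (lpp ord (fst gv))"

fun term_label ::
  "('x pp \<times> 'i \<Rightarrow> 'x pp \<times> 'i \<Rightarrow> bool) \<Rightarrow> ('x, 'k::comm_ring_1, 'i) rep_term \<Rightarrow> ('x pp \<times> 'i) option" where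
  "term_label ordm (c, s, gv) = lppv ordm (vscale (Poly_Mapping.single s c) (snd gv))"

fun admissible_term ::
  "('x pp \<times> 'i \<Rightarrow> 'x pp \<times> 'i \<Rightarrow> bool) \<Rightarrow> ('x, 'k::comm_ring_1, 'i) lpoly set \<Rightarrow> ('x pp \<times> 'i) option
   \<Rightarrow> ('x, 'k, 'i) rep_term \<Rightarrow> bool" where
  "admissible_term ordm G U (c, s, gv) \<longleftrightarrow>
     c \<noteq> 0 \<and> fst gv \<noteq> 0 \<and> gv \<in> G \<and> opt_le ordm (term_label ordm (c, s, gv)) U"

definition monomial_terms ::
  "'k::comm_ring_1 \<Rightarrow> 'x pp \<Rightarrow> ('x, 'k) mpoly \<Rightarrow> ('x, 'k, 'i) lpoly \<Rightarrow> ('x, 'k, 'i) rep_term multiset" where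
  "monomial_terms c s q gv =
     image_mset (\<lambda>r. (c * Poly_Mapping.lookup q r, s + r, gv)) (mset_set (Poly_Mapping.keys q))"

lemma sum_term_poly_monomial_terms:
  "(\<Sum>e\<in>#monomial_terms c s q gv. term_poly e) = Poly_Mapping.single s c * (q * fst gv)"
proof -
  have "(\<Sum>e\<in>#monomial_terms c s q gv. term_poly e) =
      (\<Sum>r\<in>Poly_Mapping.keys q. Poly_Mapping.single s c * Poly_Mapping.single r (Poly_Mapping.lookup q r) * fst gv)"
    by (simp add: monomial_terms_def sum_unfold_sum_mset image_mset.compositionality o_def mult_single)
  also have "\<dots> = Poly_Mapping.single s c * (q * fst gv)"
    by (subst (3) poly_mapping_sum_single) (simp add: sum_distrib_left sum_distrib_right mult.assoc)
  finally show ?thesis .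
qed

lemma sum_term_poly_sum_list_monomial_terms:
  "(\<Sum>e\<in>#(\<Sum>(q, hv)\<leftarrow>ps. monomial_terms c s q hv). term_poly e) =
    Poly_Mapping.single s c * (\<Sum>(q, hv)\<leftarrow>ps. q * fst hv)"
  by (induction ps) (auto simp: sum_term_poly_monomial_terms distrib_left)

context term_orders
begin

lemma lpp_term_poly:
  fixes e :: "('x, 'k::idom, 'i) rep_term"
  assumes "admissible_term ordm G U e"
  shows "lpp ord (term_poly e) = Some (term_lpp ord e)"
proof -
  obtain c s gv where e: "e = (c, s, gv)" by (cases e)
  then obtain a where "lpp ord (fst gv) = Some a"
    using assms lpp_eq_None_iff by fastforce
  then show ?thesis using assms e by (simp add: lpp_single_mult)
qed

lemma term_lpp_in_keys:
  fixes e :: "('x, 'k::idom, 'i) rep_term"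
  assumes "admissible_term ordm G U e"
  shows "term_lpp ord e \<in> Poly_Mapping.keys (term_poly e)"
  using lpp_in_keys[OF lpp_term_poly[OF assms]] .

lemma lookup_term_poly_below:
  fixes e :: "('x, 'k::idom, 'i) rep_term"
  assumes "admissible_term ordm G U e" and "ord (term_lpp ord e) T" and "term_lpp ord e \<noteq> T"
  shows "Poly_Mapping.lookup (term_poly e) T = 0"
  using ord_lpp[OF lpp_term_poly[OF assms(1)], of T] assms(2,3) ord_antisym
  by (auto simp: in_keys_iff)

lemma exists_greatest_term_lpp:
  assumes "R \<noteq> {#}"
  shows "\<exists>e\<in>#R. \<forall>e'\<in>#R. ord (term_lpp ord e') (term_lpp ord e)"
proof -
  have "\<exists>t\<in>term_lpp ord ` set_mset R. \<forall>t'\<in>term_lpp ord ` set_mset R. ord t' t"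
    by (rule finite_has_greatest_wrt[of ord]) (meson ord_trans, meson ord_total, simp, simp add: assms)
  then show ?thesis by auto
qed

lemma admissible_monomial_terms:
  fixes hv :: "('x, 'k::idom, 'i) lpoly"
  assumes "hv \<in> G" "fst hv \<noteq> 0" "c \<noteq> 0"
    and label: "opt_le ordm (map_option (shift_term s) (lppv ordm (vscale q (snd hv)))) U"
    and e: "e \<in># monomial_terms c s q hv"
  shows "admissible_term ordm G U e"
proof -
  obtain r where r: "r \<in> Poly_Mapping.keys q" and e: "e = (c * Poly_Mapping.lookup q r, s + r, hv)"
    using e by (auto simp: monomial_terms_def)
  have c: "c * Poly_Mapping.lookup q r \<noteq> 0" using \<open>c \<noteq> 0\<close> r by (simp add: in_keys_iff)
  have "opt_le ordm (map_option (shift_term (s + r)) (lppv ordm (snd hv))) U"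
  proof (cases "lppv ordm (snd hv)")
    case (Some a)
    obtain t0 i0 where a: "a = (t0, i0)" by fastforce
    have "opt_le ordm (Some (s + (r + t0), i0)) (map_option (shift_term s) (lppv ordm (vscale q (snd hv))))"
      using lppv_vscale_ge[of "snd hv" t0 i0 r q] Some a r opt_le_shift_term_iff[of s "Some (r + t0, i0)"]
      by simp
    then show ?thesis using Some a label opt_le_ordm_trans by (simp add: add.assoc)
  qed simp
  then show ?thesis using assms(1-2) c by (simp add: e lppv_vscale_single)
qed

lemma term_lpp_monomial_terms:
  fixes hv :: "('x, 'k::idom, 'i) lpoly"
  assumes m: "lpp ord (q * fst hv) = Some m" and e: "e \<in># monomial_terms c s q hv"
  shows "ord (term_lpp ord e) (s + m)"
proof -
  obtain r where r: "r \<in> Poly_Mapping.keys q" and e: "e = (c * Poly_Mapping.lookup q r, s + r, hv)"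
    using e by (auto simp: monomial_terms_def)
  obtain a b where a: "lpp ord q = Some a" and b: "lpp ord (fst hv) = Some b"
    using m lpp_eq_None_iff by (metis mult_zero_left mult_zero_right not_None_eq)
  have "m = a + b" using lpp_mult[OF a b] m by simp
  moreover have "ord (s + r + b) (s + (a + b))"
    using ord_add_left[OF ord_lpp[OF a r], of "s + b"] by (simp add: ac_simps)
  ultimately show ?thesis by (simp add: e b)
qed

lemma std_rep_if_terms_below_lpp:
  fixes fu :: "('x, 'k::idom, 'i) lpoly"
  assumes adm: "\<forall>e\<in>#R. admissible_term ordm G (lppv ordm (snd fu)) e"
    and below: "\<forall>e\<in>#R. opt_le ord (Some (term_lpp ord e)) (lpp ord (fst fu))"
    and sum: "(\<Sum>e\<in>#R. term_poly e) = fst fu"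
  shows "std_rep ord ordm G fu"
proof -
  obtain xs where xs: "mset xs = R" using ex_mset by blast
  define ps where "ps = map (\<lambda>(c, s, gv). (Poly_Mapping.single s c, gv)) xs"
  have "(\<Sum>(p, gv)\<leftarrow>ps. p * fst gv) = (\<Sum>e\<leftarrow>xs. term_poly e)"
    unfolding ps_def by (induction xs) (auto split: prod.splits)
  also have "\<dots> = fst fu"
    using sum by (simp flip: xs sum_mset_sum_list)
  finally have "fst fu = (\<Sum>(p, gv)\<leftarrow>ps. p * fst gv)" ..
  moreover have "gv \<in> G \<and> opt_le ord (lpp ord (p * fst gv)) (lpp ord (fst fu)) \<and>
      opt_le ordm (lppv ordm (vscale p (snd gv))) (lppv ordm (snd fu))" if pgv: "(p, gv) \<in> set ps" for p gv
  proof -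
    obtain c s where e: "(c, s, gv) \<in># R" "p = Poly_Mapping.single s c"
      using pgv xs by (auto simp: ps_def)
    have "admissible_term ordm G (lppv ordm (snd fu)) (c, s, gv)"
      and "opt_le ord (Some (term_lpp ord (c, s, gv))) (lpp ord (fst fu))"
      using adm below e(1) by auto
    then show ?thesis
      using lpp_term_poly[of G "lppv ordm (snd fu)" "(c, s, gv)"] e(2) by auto
  qed
  ultimately show ?thesis
    unfolding std_rep_def by (intro exI[of _ ps]) auto
qed

lemma admissible_terms_of_std_rep:
  fixes S :: "('x, 'k::field, 'i) lpoly"
  assumes std: "std_rep ord ordm G S"
    and below: "\<And>k. k \<in> Poly_Mapping.keys (fst S) \<Longrightarrow> ord k L \<and> k \<noteq> L"
    and label: "opt_le ordm (map_option (shift_term s) (lppv ordm (snd S))) U"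
    and "c \<noteq> 0"
  shows "\<exists>N. (\<forall>e\<in>#N. admissible_term ordm G U e \<and> ord (term_lpp ord e) (s + L) \<and> term_lpp ord e \<noteq> s + L) \<and>
    (\<Sum>e\<in>#N. term_poly e) = Poly_Mapping.single s c * fst S"
proof -
  obtain ps where ps_G: "\<forall>(q, hv)\<in>set ps. hv \<in> G"
    and ps_sum: "fst S = (\<Sum>(q, hv)\<leftarrow>ps. q * fst hv)"
    and ps_le: "\<forall>(q, hv)\<in>set ps. opt_le ord (lpp ord (q * fst hv)) (lpp ord (fst S)) \<and>
                  opt_le ordm (lppv ordm (vscale q (snd hv))) (lppv ordm (snd S))"
    using std unfolding std_rep_def by blast
  define ps' where "ps' = filter (\<lambda>(q, hv). q * fst hv \<noteq> 0) ps"
  define N where "N = (\<Sum>(q, hv)\<leftarrow>ps'. monomial_terms c s q hv)"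
  have "(\<Sum>(q, hv)\<leftarrow>ps'. q * fst hv) = (\<Sum>(q, hv)\<leftarrow>ps. q * fst hv)"
    unfolding ps'_def by (rule sum_list_map_filter) auto
  then have sum: "(\<Sum>e\<in>#N. term_poly e) = Poly_Mapping.single s c * fst S"
    unfolding N_def sum_term_poly_sum_list_monomial_terms ps_sum by simp
  have "admissible_term ordm G U e \<and> ord (term_lpp ord e) (s + L) \<and> term_lpp ord e \<noteq> s + L" if e: "e \<in># N" for e
  proof -
    obtain q hv where qhv: "(q, hv) \<in> set ps" "q * fst hv \<noteq> 0" and e: "e \<in># monomial_terms c s q hv"
      using e by (auto simp: N_def ps'_def)
    obtain m where m: "lpp ord (q * fst hv) = Some m" using qhv(2) lpp_eq_None_iff by fastforce
    obtain M where M: "lpp ord (fst S) = Some M" "ord m M"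
      using ps_le qhv(1) m by (cases "lpp ord (fst S)") auto
    have M_below: "ord M L" "M \<noteq> L" using below[OF lpp_in_keys[OF M(1)]] by auto
    have "opt_le ordm (lppv ordm (vscale q (snd hv))) (lppv ordm (snd S))"
      using ps_le qhv(1) by auto
    then have "opt_le ordm (map_option (shift_term s) (lppv ordm (vscale q (snd hv)))) U"
      using label opt_le_ordm_trans opt_le_shift_term_iff by blast
    moreover have "hv \<in> G" "fst hv \<noteq> 0" using ps_G qhv by auto
    ultimately have "admissible_term ordm G U e"
      using admissible_monomial_terms \<open>c \<noteq> 0\<close> e by blast
    moreover have "ord (term_lpp ord e) (s + M)"
      using term_lpp_monomial_terms[OF m e] ord_add_left[OF M(2)] ord_trans by blast
    moreover have "ord (s + M) (s + L)" "s + M \<noteq> s + L" using M_below ord_add_left by auto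
    ultimately show ?thesis by (metis ord_trans ord_antisym)
  qed
  with sum show ?thesis by blast
qed

end

section \<open>The criterion\<close>

locale spoly_criterion = term_orders ord ordm
  for ord :: "'x pp \<Rightarrow> 'x pp \<Rightarrow> bool" and ordm :: "'x pp \<times> 'i::finite \<Rightarrow> 'x pp \<times> 'i \<Rightarrow> bool" +
  fixes F :: "('x, 'k::field, 'i) mvec"
    and G :: "('x, 'k, 'i) lpoly set"
    and fu :: "('x, 'k, 'i) lpoly"
  assumes generators_in_G: "\<And>i. (F i, unit_vec i) \<in> G"
    and fu_in_ideal: "in_ideal_lab F fu"
    and spoly_std_rep: "\<And>tg gv th hw. critical_pair ord ordm G tg gv th hw \<Longrightarrow>
      opt_le ordm (lppv ordm (vscale (monom_pp tg) (snd gv))) (lppv ordm (snd fu)) \<Longrightarrow>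
      std_rep ord ordm G (spoly ord tg gv th hw)"
begin

abbreviation admissible :: "('x, 'k, 'i) rep_term \<Rightarrow> bool" where
  "admissible \<equiv> admissible_term ordm G (lppv ordm (snd fu))"

definition admissible_rep :: "('x, 'k, 'i) rep_term multiset \<Rightarrow> bool" where
  "admissible_rep R \<longleftrightarrow> (\<forall>e\<in>#R. admissible e) \<and> (\<Sum>e\<in>#R. term_poly e) = fst fu"

lemma admissible_rep_exists: "\<exists>R. admissible_rep R"
proof -
  define I where "I = {i. F i \<noteq> 0}"
  define R where "R = (\<Sum>i\<in>I. monomial_terms 1 0 (snd fu i) (F i, unit_vec i))"
  have "admissible e" if "e \<in># R" for e
  proof -
    obtain i where i: "F i \<noteq> 0" "e \<in># monomial_terms 1 0 (snd fu i) (F i, unit_vec i)"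
      using \<open>e \<in># R\<close> by (auto simp: R_def I_def set_mset_sum)
    have "vkeys (vscale (snd fu i) (unit_vec i)) \<subseteq> vkeys (snd fu) \<union> vkeys (snd fu)"
      by (auto simp: vkeys_def vscale_def unit_vec_def split: if_splits)
    then have "opt_le ordm (lppv ordm (vscale (snd fu i) (unit_vec i))) (lppv ordm (snd fu))"
      by (rule lppv_le_if_vkeys_subset) (cases "lppv ordm (snd fu)"; simp add: ordm_refl)
    then show ?thesis
      using admissible_monomial_terms[OF generators_in_G _ _ _ i(2)] i(1) by (simp add: option.map_id)
  qed
  moreover have "(\<Sum>e\<in>#R. term_poly e) = fst fu"
  proof -
    have "(\<Sum>e\<in>#R. term_poly e) = (\<Sum>i\<in>I. snd fu i * F i)"
      unfolding R_def
      by (induction I rule: infinite_finite_induct) (auto simp: sum_term_poly_monomial_terms)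
    also have "\<dots> = (\<Sum>i\<in>UNIV. snd fu i * F i)"
      by (rule sum.mono_neutral_left) (auto simp: I_def)
    finally show ?thesis using fu_in_ideal by (simp add: in_ideal_lab_def)
  qed
  ultimately show ?thesis unfolding admissible_rep_def by blast
qed

lemma spoly_of_top_pair:
  assumes eg: "admissible (cg, sg, gv)" and eh: "admissible (ch, sh, hw)"
    and lg: "lpp ord (fst gv) = Some lg" and lh: "lpp ord (fst hw) = Some lh"
    and sg: "s + (pp_lcm lg lh - lg) = sg" and sh: "s + (pp_lcm lg lh - lh) = sh"
    and orient: "opt_le ordm (term_label ordm (ch, sh, hw)) (term_label ordm (cg, sg, gv))"
  defines "S \<equiv> spoly ord (pp_lcm lg lh - lg) gv (pp_lcm lg lh - lh) hw"
  shows "std_rep ord ordm G S"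
    and "opt_le ordm (map_option (shift_term s) (lppv ordm (snd S))) (lppv ordm (snd fu))"
proof -
  let ?tg = "pp_lcm lg lh - lg" and ?th = "pp_lcm lg lh - lh"
  let ?label = "\<lambda>t v. lppv ordm (vscale (monom_pp t) v)"
  have cg: "cg \<noteq> 0" and ch: "ch \<noteq> 0" using eg eh by simp_all
  have "opt_le ordm (map_option (shift_term s) (?label ?th (snd hw)))
      (map_option (shift_term s) (?label ?tg (snd gv)))"
    using orient by (simp add: lppv_vscale_single[OF cg] lppv_vscale_single[OF ch] lppv_vscale_monom_pp sg sh)
  then have oriented: "opt_le ordm (?label ?th (snd hw)) (?label ?tg (snd gv))"
    unfolding opt_le_shift_term_iff .
  have bounded: "opt_le ordm (map_option (shift_term s) (?label ?tg (snd gv))) (lppv ordm (snd fu))"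
    using eg by (simp add: lppv_vscale_single[OF cg] lppv_vscale_monom_pp sg)
  then have "opt_le ordm (?label ?tg (snd gv)) (lppv ordm (snd fu))"
    using opt_le_shift_term opt_le_ordm_trans by blast
  moreover have "critical_pair ord ordm G ?tg gv ?th hw"
    using eg eh lg lh oriented by (simp add: critical_pair_def)
  ultimately show "std_rep ord ordm G S"
    unfolding S_def using spoly_std_rep by blast
  have "opt_le ordm (map_option (shift_term s) (lppv ordm (snd S)))
      (map_option (shift_term s) (?label ?tg (snd gv)))"
    unfolding opt_le_shift_term_iff S_def by (rule lppv_spoly_le[OF oriented])
  then show "opt_le ordm (map_option (shift_term s) (lppv ordm (snd S))) (lppv ordm (snd fu))"
    using bounded opt_le_ordm_trans by blast
qed

lemma top_pair_difference:
  assumes eg: "admissible (cg, sg, gv)" and eh: "admissible (ch, sh, hw)"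
    and Tg: "term_lpp ord (cg, sg, gv) = T" and Th: "term_lpp ord (ch, sh, hw) = T"
    and orient: "opt_le ordm (term_label ordm (ch, sh, hw)) (term_label ordm (cg, sg, gv))"
  shows "\<exists>N. (\<forall>e\<in>#N. admissible e \<and> ord (term_lpp ord e) T \<and> term_lpp ord e \<noteq> T) \<and>
    (\<Sum>e\<in>#N. term_poly e) = Poly_Mapping.single sg cg * fst gv
      - Poly_Mapping.single sh (cg * (lc ord (fst gv) / lc ord (fst hw))) * fst hw"
proof -
  obtain lg lh where lg: "lpp ord (fst gv) = Some lg" and lh: "lpp ord (fst hw) = Some lh"
    using eg eh lpp_eq_None_iff by fastforce
  define L where "L = pp_lcm lg lh"
  let ?S = "spoly ord (L - lg) gv (L - lh) hw"
  have "sg + lg = T" "sh + lh = T" using Tg Th lg lh by simp_all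
  note cofactors = pp_lcm_cofactors[OF this, folded L_def]
  note spoly = spoly_of_top_pair[OF eg eh lg lh cofactors(1,2)[unfolded L_def] orient, folded L_def]
  have "cg \<noteq> 0" using eg by simp
  have below: "\<And>k. k \<in> Poly_Mapping.keys (fst ?S) \<Longrightarrow> ord k L \<and> k \<noteq> L"
    using keys_spoly_below_lcm[OF lg lh] unfolding L_def .
  have "\<exists>N. (\<forall>e\<in>#N. admissible e \<and> ord (term_lpp ord e) (T - L + L) \<and> term_lpp ord e \<noteq> T - L + L) \<and>
      (\<Sum>e\<in>#N. term_poly e) = Poly_Mapping.single (T - L) cg * fst ?S"
    by (rule admissible_terms_of_std_rep[OF spoly(1) _ spoly(2) \<open>cg \<noteq> 0\<close>]) (fact below)
  then obtain N where N: "\<forall>e\<in>#N. admissible e \<and> ord (term_lpp ord e) T \<and> term_lpp ord e \<noteq> T"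
    and sum: "(\<Sum>e\<in>#N. term_poly e) = Poly_Mapping.single (T - L) cg * fst ?S"
    unfolding cofactors(3) by blast
  have "Poly_Mapping.single (T - L) cg * fst ?S = Poly_Mapping.single sg cg * fst gv
      - Poly_Mapping.single sh (cg * (lc ord (fst gv) / lc ord (fst hw))) * fst hw"
    by (simp add: fst_spoly right_diff_distrib mult_single cofactors flip: mult.assoc)
  then show ?thesis using N sum by auto
qed

lemma cancel_top_pair:
  assumes R: "admissible_rep R" and bound: "\<forall>e\<in>#R. ord (term_lpp ord e) T"
    and pair: "{#(cg, sg, gv), (ch, sh, hw)#} \<subseteq># R"
    and Tg: "term_lpp ord (cg, sg, gv) = T" and Th: "term_lpp ord (ch, sh, hw) = T"
    and orient: "opt_le ordm (term_label ordm (ch, sh, hw)) (term_label ordm (cg, sg, gv))"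
  shows "\<exists>R'. admissible_rep R' \<and> (\<forall>e\<in>#R'. ord (term_lpp ord e) T) \<and>
    size (filter_mset (\<lambda>e. term_lpp ord e = T) R') < size (filter_mset (\<lambda>e. term_lpp ord e = T) R)"
proof -
  define R0 where "R0 = R - {#(cg, sg, gv), (ch, sh, hw)#}"
  have R0: "R = R0 + {#(cg, sg, gv), (ch, sh, hw)#}"
    unfolding R0_def using subset_mset.diff_add[OF pair] by (simp add: add.commute)
  have eg: "admissible (cg, sg, gv)" and eh: "admissible (ch, sh, hw)"
    using R by (auto simp: admissible_rep_def R0)
  define d where "d = lc ord (fst gv) / lc ord (fst hw)"
  obtain N where N: "\<forall>e\<in>#N. admissible e \<and> ord (term_lpp ord e) T \<and> term_lpp ord e \<noteq> T"
    and sum_N: "(\<Sum>e\<in>#N. term_poly e) = Poly_Mapping.single sg cg * fst gv - Poly_Mapping.single sh (cg * d) * fst hw"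
    using top_pair_difference[OF eg eh Tg Th orient] unfolding d_def by blast
  define c' where "c' = ch + cg * d"
  define K where "K = (if c' = 0 then {#} else {#(c', sh, hw)#})"
  have "term_label ordm (c', sh, hw) = term_label ordm (ch, sh, hw)" if "c' \<noteq> 0"
    using that eh by (simp add: lppv_vscale_single)
  then have K: "\<forall>e\<in>#K. admissible e \<and> term_lpp ord e = T"
    using eh Th by (simp add: K_def)
  have sum_K: "(\<Sum>e\<in>#K. term_poly e) = Poly_Mapping.single sh c' * fst hw"
    by (simp add: K_def)
  define R' where "R' = R0 + K + N"
  have "(\<Sum>e\<in>#R'. term_poly e) = (\<Sum>e\<in>#R. term_poly e)"
    by (simp add: R'_def R0 sum_K sum_N c'_def single_add algebra_simps)
  moreover have "\<forall>e\<in>#R0. admissible e \<and> ord (term_lpp ord e) T"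
    using R bound by (simp add: admissible_rep_def R0)
  then have "\<forall>e\<in>#R'. admissible e \<and> ord (term_lpp ord e) T"
    using K N ord_refl unfolding R'_def set_mset_union ball_Un by fastforce
  ultimately have "admissible_rep R'" "\<forall>e\<in>#R'. ord (term_lpp ord e) T"
    using R by (auto simp: admissible_rep_def)
  moreover have top_N: "filter_mset (\<lambda>e. term_lpp ord e = T) N = {#}"
    using N by auto
  have "size (filter_mset (\<lambda>e. term_lpp ord e = T) R') < size (filter_mset (\<lambda>e. term_lpp ord e = T) R)"
    using Tg Th by (simp add: R'_def R0 K_def top_N del: filter_mset_eq_mempty_iff)
  ultimately show ?thesis by blast
qed

lemma fewer_top_terms:
  assumes R: "admissible_rep R" and bound: "\<forall>e\<in>#R. ord (term_lpp ord e) T"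
    and pair: "{#eg, eh#} \<subseteq># filter_mset (\<lambda>e. term_lpp ord e = T) R"
  shows "\<exists>R'. admissible_rep R' \<and> (\<forall>e\<in>#R'. ord (term_lpp ord e) T) \<and>
    size (filter_mset (\<lambda>e. term_lpp ord e = T) R') < size (filter_mset (\<lambda>e. term_lpp ord e = T) R)"
proof -
  have pair_R: "{#eg, eh#} \<subseteq># R" using pair multiset_filter_subset by (rule subset_mset.order_trans)
  have T: "term_lpp ord eg = T" "term_lpp ord eh = T"
    using pair by (auto dest: mset_subset_eqD)
  obtain cg sg gv where eg: "eg = (cg, sg, gv)" by (rule prod_cases3)
  obtain ch sh hw where eh: "eh = (ch, sh, hw)" by (rule prod_cases3)
  show ?thesis
  proof (cases "opt_le ordm (term_label ordm eh) (term_label ordm eg)")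
    case True
    then show ?thesis using cancel_top_pair[OF R bound] pair_R T eg eh by simp
  next
    case False
    then have "opt_le ordm (term_label ordm eg) (term_label ordm eh)"
      using opt_le_ordm_total by blast
    moreover have "{#eh, eg#} \<subseteq># R" using pair_R by (simp add: add_mset_commute)
    ultimately show ?thesis using cancel_top_pair[OF R bound] T eg eh by simp
  qed
qed

lemma lookup_fst_fu_top:
  assumes R: "admissible_rep R" and bound: "\<forall>e\<in>#R. ord (term_lpp ord e) T"
  shows "Poly_Mapping.lookup (fst fu) T =
    (\<Sum>e\<in>#filter_mset (\<lambda>e. term_lpp ord e = T) R. Poly_Mapping.lookup (term_poly e) T)"
proof -
  let ?top = "filter_mset (\<lambda>e. term_lpp ord e = T) R"
    and ?rest = "filter_mset (\<lambda>e. term_lpp ord e \<noteq> T) R"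
  have "Poly_Mapping.lookup (term_poly e) T = 0" if "e \<in># ?rest" for e
  proof (rule lookup_term_poly_below)
    show "admissible e" "ord (term_lpp ord e) T" "term_lpp ord e \<noteq> T"
      using that R bound unfolding admissible_rep_def by simp_all
  qed
  then have "(\<Sum>e\<in>#?rest. Poly_Mapping.lookup (term_poly e) T) = 0"
    by (simp add: sum_mset.neutral)
  moreover have partition: "?top + ?rest = R" by (rule multiset_partition[symmetric])
  have "fst fu = (\<Sum>e\<in>#?top + ?rest. term_poly e)"
    using R unfolding admissible_rep_def by (simp only: partition)
  then have "Poly_Mapping.lookup (fst fu) T =
      (\<Sum>e\<in>#?top. Poly_Mapping.lookup (term_poly e) T) + (\<Sum>e\<in>#?rest. Poly_Mapping.lookup (term_poly e) T)"
    by (simp only: lookup_add lookup_sum_mset image_mset_union sum_mset.union)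
  ultimately show ?thesis by simp
qed

lemma eliminate_top:
  assumes "admissible_rep R" and "\<forall>e\<in>#R. ord (term_lpp ord e) T"
    and coeff: "Poly_Mapping.lookup (fst fu) T = 0"
  shows "\<exists>R'. admissible_rep R' \<and> (\<forall>e\<in>#R'. ord (term_lpp ord e) T \<and> term_lpp ord e \<noteq> T)"
  using assms(1,2)
proof (induction "size (filter_mset (\<lambda>e. term_lpp ord e = T) R)" arbitrary: R rule: less_induct)
  case less
  consider "filter_mset (\<lambda>e. term_lpp ord e = T) R = {#}"
    | e where "filter_mset (\<lambda>e. term_lpp ord e = T) R = {#e#}"
    | eg eh where "{#eg, eh#} \<subseteq># filter_mset (\<lambda>e. term_lpp ord e = T) R"
    by (rule multiset_empty_singleton_or_pair)
  then show ?case
  proof cases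
    case 1
    then have "\<forall>e\<in>#R. term_lpp ord e \<noteq> T" unfolding filter_mset_eq_mempty_iff by blast
    then show ?thesis using less.prems by blast
  next
    case (2 e)
    then have "e \<in># filter_mset (\<lambda>e. term_lpp ord e = T) R" by simp
    then have "e \<in># R" and T: "term_lpp ord e = T" by simp_all
    then have "admissible e" using less.prems unfolding admissible_rep_def by blast
    then have "Poly_Mapping.lookup (term_poly e) T \<noteq> 0"
      using term_lpp_in_keys[OF \<open>admissible e\<close>] T by (simp add: in_keys_iff)
    then show ?thesis
      using coeff lookup_fst_fu_top[OF less.prems] 2 by simp
  next
    case 3
    then show ?thesis using fewer_top_terms[OF less.prems] less.hyps by blast
  qed
qed

lemma std_rep_if_bounded_rep:
  "admissible_rep R \<Longrightarrow> \<forall>e\<in>#R. ord (term_lpp ord e) T \<Longrightarrow> std_rep ord ordm G fu"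
proof (induction T arbitrary: R rule: wf_induct[OF wf_ord_strict])
  case (1 T)
  show ?case
  proof (cases "Poly_Mapping.lookup (fst fu) T = 0")
    case False
    then obtain M where M: "lpp ord (fst fu) = Some M" and "ord T M"
      using ord_lpp lpp_eq_None_iff by (metis in_keys_iff lookup_zero not_None_eq)
    then have "\<forall>e\<in>#R. opt_le ord (Some (term_lpp ord e)) (lpp ord (fst fu))"
      using "1.prems"(2) ord_trans by (simp add: M) blast
    then show ?thesis
      using std_rep_if_terms_below_lpp "1.prems"(1) unfolding admissible_rep_def by blast
  next
    case True
    then obtain R' where R': "admissible_rep R'"
      and below: "\<forall>e\<in>#R'. ord (term_lpp ord e) T \<and> term_lpp ord e \<noteq> T"
      using eliminate_top "1.prems" by blast
    show ?thesis
    proof (cases "R' = {#}")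
      case True
      then show ?thesis
        using std_rep_if_terms_below_lpp[where R = R'] R' unfolding admissible_rep_def by simp
    next
      case False
      then obtain e where "e \<in># R'" and "\<forall>e'\<in>#R'. ord (term_lpp ord e') (term_lpp ord e)"
        using exists_greatest_term_lpp by blast
      then show ?thesis
        using "1.IH" R' below by blast
    qed
  qed
qed

theorem fu_has_std_rep: "std_rep ord ordm G fu"
proof -
  obtain R where R: "admissible_rep R" using admissible_rep_exists by blast
  show ?thesis
  proof (cases "R = {#}")
    case True
    then show ?thesis using std_rep_if_bounded_rep[OF R] by simp
  next
    case False
    then show ?thesis
      using std_rep_if_bounded_rep[OF R] exists_greatest_term_lpp by blast
  qed
qed

end

theorem lemma5p1:
  fixes ord :: "('x::finite) pp \<Rightarrow> 'x pp \<Rightarrow> bool"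
    and ordm :: "'x pp \<times> ('i::finite) \<Rightarrow> 'x pp \<times> 'i \<Rightarrow> bool"
    and F :: "('x, 'k::field, 'i) mvec"
    and G :: "(('x, 'k) mpoly \<times> ('x, 'k, 'i) mvec) set"
    and fu :: "('x, 'k) mpoly \<times> ('x, 'k, 'i) mvec"
  assumes "term_order ord"
    and "module_term_order ordm"
    and "finite G"
    and "\<forall>gv\<in>G. in_ideal_lab F gv"
    and "\<forall>i. (F i, unit_vec i) \<in> G"
    and "in_ideal_lab F fu"
    and "\<forall>tg gv th hw. critical_pair ord ordm G tg gv th hw \<and>
           opt_le ordm (lppv ordm (vscale (monom_pp tg) (snd gv))) (lppv ordm (snd fu))
           \<longrightarrow> std_rep ord ordm G (spoly ord tg gv th hw)"
  shows "std_rep ord ordm G fu"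
proof -
  interpret spoly_criterion ord ordm F G fu
    using assms(1,2,5-7) by unfold_locales auto
  show ?thesis by (rule fu_has_std_rep)
qed

end
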